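(* Let $k\geq 0$ and let $i,j\geq k+2$ be integers. Then $R_k^{\mathcal{CO}}(i,j)\geq (i-1)+R_k^{\mathcal{CO}}(i,j-k-1)$, where $\mathcal{CO}$ is the class of cographs.
   Context: All graphs are finite and simple. For a graph $G$ and a nonnegative integer $k$, a $k$-sparse $j$-set is a set of $j$ vertices of $G$ inducing a subgraph of maximum degree at most $k$; a $k$-dense $i$-set is a set of $i$ vertices of $G$ that is $k$-sparse in the complement of $G$. For a graph class $\mathcal{G}$, $R_k^{\mathcal{G}}(i,j)$ is the smallest natural number $n$ such that every graph on $n$ vertices in $\mathcal{G}$ has either a $k$-dense $i$-set or a $k$-sparse $j$-set (in particular every set of at most $k+1$ vertices is both $k$-sparse and $k$-dense). A cograph is a graph containing no induced path on four vertices. *)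

theory Defs
  imports Main
begin

text \<open>A finite simple graph with vertex set V (a finite set of naturals; every
finite graph is isomorphic to such a graph) and symmetric irreflexive edge
relation E whose edges lie inside V.\<close>
definition simple_graph :: "nat set \<Rightarrow> (nat \<Rightarrow> nat \<Rightarrow> bool) \<Rightarrow> bool" where
  "simple_graph V E \<longleftrightarrow> finite V \<and> (\<forall>u v. E u v \<longrightarrow> E v u)
     \<and> (\<forall>u. \<not> E u u) \<and> (\<forall>u v. E u v \<longrightarrow> u \<in> V \<and> v \<in> V)"

definition k_sparse :: "(nat \<Rightarrow> nat \<Rightarrow> bool) \<Rightarrow> nat \<Rightarrow> nat set \<Rightarrow> bool" where
  "k_sparse E k S \<longleftrightarrow> (\<forall>u\<in>S. card {v\<in>S. E u v} \<le> k)"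

definition compl_edges :: "(nat \<Rightarrow> nat \<Rightarrow> bool) \<Rightarrow> nat \<Rightarrow> nat \<Rightarrow> bool" where
  "compl_edges E u v \<longleftrightarrow> u \<noteq> v \<and> \<not> E u v"

definition k_dense :: "(nat \<Rightarrow> nat \<Rightarrow> bool) \<Rightarrow> nat \<Rightarrow> nat set \<Rightarrow> bool" where
  "k_dense E k S \<longleftrightarrow> k_sparse (compl_edges E) k S"

definition cograph :: "nat set \<Rightarrow> (nat \<Rightarrow> nat \<Rightarrow> bool) \<Rightarrow> bool" where
  "cograph V E \<longleftrightarrow> simple_graph V E \<and>
     \<not> (\<exists>a\<in>V. \<exists>b\<in>V. \<exists>c\<in>V. \<exists>d\<in>V. E a b \<and> E b c \<and> E c d \<and>
          \<not> E a c \<and> \<not> E b d \<and> \<not> E a d \<and> a \<noteq> d)"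

definition has_dense_or_sparse :: "nat set \<Rightarrow> (nat \<Rightarrow> nat \<Rightarrow> bool) \<Rightarrow> nat \<Rightarrow> nat \<Rightarrow> nat \<Rightarrow> bool" where
  "has_dense_or_sparse V E k i j \<longleftrightarrow>
     (\<exists>S\<subseteq>V. card S = i \<and> k_dense E k S) \<or> (\<exists>S\<subseteq>V. card S = j \<and> k_sparse E k S)"

definition R_cograph :: "nat \<Rightarrow> nat \<Rightarrow> nat \<Rightarrow> nat" where
  "R_cograph k i j = (LEAST n. \<forall>V E. cograph V E \<and> card V = n \<longrightarrow> has_dense_or_sparse V E k i j)"

end

theory Submission
  imports Defs "HOL-Library.Ramsey"
begin

(*
  Below i - 1 vertices the complete graph is a counterexample. Above that, take a cograph G
  with neither a k-dense i-set nor a k-sparse (j - k - 1)-set, and add disjointly a clique Q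
  of i - k - 2 vertices completely joined to an independent set I of k + 1 vertices; this
  is again a cograph. A k-dense i-set S would have to meet Q or I, as G has none. But if S
  meets I in x, then x is non-adjacent to the at least i - |Q| - 1 = k + 1 other vertices of
  S outside Q; otherwise a vertex of S in Q is non-adjacent to the at least k + 2 vertices
  of S in G. A k-sparse j-set has fewer than j - k - 1 vertices in G,
  hence at least k + 2 new ones, one of which lies in Q and is adjacent to all the others.
*)

lemma cograph_imp_simple_graph: "cograph V E \<Longrightarrow> simple_graph V E"
  by (simp add: cograph_def)

lemma k_sparse_cong:
  assumes "\<And>u v. u \<in> S \<Longrightarrow> v \<in> S \<Longrightarrow> E u v \<longleftrightarrow> F u v"
  shows "k_sparse E k S \<longleftrightarrow> k_sparse F k S"
proof -
  have "{v\<in>S. E u v} = {v\<in>S. F u v}" if "u \<in> S" for u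
    using assms that by blast
  then show ?thesis
    unfolding k_sparse_def by simp
qed

lemma k_dense_cong:
  assumes "\<And>u v. u \<in> S \<Longrightarrow> v \<in> S \<Longrightarrow> E u v \<longleftrightarrow> F u v"
  shows "k_dense E k S \<longleftrightarrow> k_dense F k S"
  unfolding k_dense_def by (rule k_sparse_cong) (simp add: compl_edges_def assms)

lemma k_sparse_subset:
  assumes "k_sparse E k S" "T \<subseteq> S" "finite S"
  shows "k_sparse E k T"
  unfolding k_sparse_def
proof
  fix u assume "u \<in> T"
  have "card {v\<in>T. E u v} \<le> card {v\<in>S. E u v}"
    using assms(2,3) by (intro card_mono) auto
  also have "\<dots> \<le> k"
    using assms(1,2) \<open>u \<in> T\<close> by (auto simp: k_sparse_def)
  finally show "card {v\<in>T. E u v} \<le> k" .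
qed

lemma k_sparse_if_edgeless:
  assumes "\<And>u v. u \<in> S \<Longrightarrow> v \<in> S \<Longrightarrow> \<not> E u v"
  shows "k_sparse E k S"
  unfolding k_sparse_def
proof
  fix u assume "u \<in> S"
  then have "{v\<in>S. E u v} = {}"
    using assms by blast
  then show "card {v\<in>S. E u v} \<le> k" by (metis card.empty le0)
qed

lemma k_dense_if_complete:
  assumes "\<And>u v. u \<in> S \<Longrightarrow> v \<in> S \<Longrightarrow> u \<noteq> v \<Longrightarrow> E u v"
  shows "k_dense E k S"
  unfolding k_dense_def by (rule k_sparse_if_edgeless) (use assms in \<open>auto simp: compl_edges_def\<close>)

lemma k_sparse_card_le:
  assumes "k_sparse E k S" "u \<in> S" "T \<subseteq> {v\<in>S. E u v}" "finite S"
  shows "card T \<le> k"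
proof -
  have "card T \<le> card {v\<in>S. E u v}"
    using assms(3,4) by (intro card_mono) auto
  also have "\<dots> \<le> k"
    using assms(1,2) by (simp add: k_sparse_def)
  finally show ?thesis .
qed

lemma simple_graph_ex_dense_or_sparse:
  "\<exists>n. \<forall>V E. simple_graph V E \<and> card V = n \<longrightarrow> has_dense_or_sparse V E k i j"
proof -
  obtain n where n: "\<forall>(V::nat set) (F::nat set set). finite V \<and> card V \<ge> n \<longrightarrow>
      (\<exists>S \<subseteq> V. card S = i \<and> clique S F \<or> card S = j \<and> indep S F)"
    using ramsey2[where m = i and n = j] by blast
  have "has_dense_or_sparse V E k i j" if "simple_graph V E" "card V = n" for V E
  proof -
    define F where "F = {{u, v} | u v. E u v}"
    have edge_iff: "{u, v} \<in> F \<longleftrightarrow> E u v" for u v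
      using \<open>simple_graph V E\<close> by (auto simp: F_def simple_graph_def doubleton_eq_iff)
    obtain S where "S \<subseteq> V" "card S = i \<and> clique S F \<or> card S = j \<and> indep S F"
      using n \<open>simple_graph V E\<close> \<open>card V = n\<close> unfolding simple_graph_def by blast
    moreover have "k_dense E k S" if "clique S F"
      using that by (intro k_dense_if_complete) (auto simp: clique_def edge_iff)
    moreover have "k_sparse E k S" if "indep S F"
      using that \<open>simple_graph V E\<close>
      by (intro k_sparse_if_edgeless) (metis edge_iff indep_def simple_graph_def)
    ultimately show ?thesis
      unfolding has_dense_or_sparse_def by blast
  qed
  then show ?thesis by blast
qed

definition cograph_counterexample :: "nat \<Rightarrow> nat \<Rightarrow> nat \<Rightarrow> nat \<Rightarrow> bool" where
  "cograph_counterexample k i j n \<longleftrightarrow>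
     (\<exists>V E. cograph V E \<and> card V = n \<and> \<not> has_dense_or_sparse V E k i j)"

lemma cograph_counterexample_if_less_R_cograph:
  assumes "n < R_cograph k i j"
  shows "cograph_counterexample k i j n"
  using not_less_Least[OF assms[unfolded R_cograph_def]]
  by (auto simp: cograph_counterexample_def)

lemma R_cograph_ge:
  assumes "\<And>n. n < m \<Longrightarrow> cograph_counterexample k i j n"
  shows "m \<le> R_cograph k i j"
  unfolding R_cograph_def
proof (rule LeastI2_ex)
  show "\<exists>n. \<forall>V E. cograph V E \<and> card V = n \<longrightarrow> has_dense_or_sparse V E k i j"
    using simple_graph_ex_dense_or_sparse[of k i j] cograph_imp_simple_graph by blast
next
  fix n assume "\<forall>V E. cograph V E \<and> card V = n \<longrightarrow> has_dense_or_sparse V E k i j"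
  then have "\<not> cograph_counterexample k i j n"
    by (auto simp: cograph_counterexample_def)
  then show "m \<le> n"
    using assms by (meson not_le)
qed

lemma cograph_counterexample_complete:
  assumes "n < i" "k + 2 \<le> j"
  shows "cograph_counterexample k i j n"
proof -
  define E where "E = (\<lambda>u v. u \<noteq> v \<and> u < n \<and> v < n)"
  have "cograph {..<n} E"
    unfolding cograph_def simple_graph_def E_def by auto
  moreover have False if "S \<subseteq> {..<n}" "card S = j" "k_sparse E k S" for S
  proof -
    have "finite S"
      using \<open>S \<subseteq> {..<n}\<close> finite_subset by blast
    moreover obtain u where "u \<in> S"
      using \<open>card S = j\<close> assms(2) by fastforce
    moreover have "S - {u} \<subseteq> {v\<in>S. E u v}"
      using \<open>S \<subseteq> {..<n}\<close> \<open>u \<in> S\<close> by (auto simp: E_def)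
    ultimately have "card (S - {u}) \<le> k"
      using k_sparse_card_le[OF \<open>k_sparse E k S\<close>] by blast
    then show False
      using \<open>finite S\<close> \<open>u \<in> S\<close> \<open>card S = j\<close> assms(2) by simp
  qed
  moreover have "card S \<noteq> i" if "S \<subseteq> {..<n}" for S
    using card_mono[OF _ that] assms(1) by fastforce
  ultimately show ?thesis
    unfolding cograph_counterexample_def has_dense_or_sparse_def
    by (metis card_lessThan)
qed

definition induced_P4 :: "(nat \<Rightarrow> nat \<Rightarrow> bool) \<Rightarrow> nat \<Rightarrow> nat \<Rightarrow> nat \<Rightarrow> nat \<Rightarrow> bool" where
  "induced_P4 E a b c d \<longleftrightarrow> E a b \<and> E b c \<and> E c d \<and> \<not> E a c \<and> \<not> E b d \<and> \<not> E a d \<and> a \<noteq> d"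

lemma cograph_iff_no_induced_P4:
  "cograph V E \<longleftrightarrow> simple_graph V E \<and> \<not> (\<exists>a\<in>V. \<exists>b\<in>V. \<exists>c\<in>V. \<exists>d\<in>V. induced_P4 E a b c d)"
  unfolding cograph_def induced_P4_def ..

lemma no_induced_P4_union_from_side:
  assumes "cograph V E" "\<And>u v. F u v \<Longrightarrow> u \<notin> V" "a \<in> V"
  shows "\<not> induced_P4 (\<lambda>u v. E u v \<or> F u v) a b c d"
proof
  assume P4: "induced_P4 (\<lambda>u v. E u v \<or> F u v) a b c d"
  have E_in_V: "E u v \<Longrightarrow> v \<in> V" for u v
    using cograph_imp_simple_graph[OF assms(1)] by (simp add: simple_graph_def)
  have "E a b" using P4 assms(2,3) by (auto simp: induced_P4_def)
  then have "E b c" using P4 assms(2) E_in_V by (auto simp: induced_P4_def)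
  then have "E c d" using P4 assms(2) E_in_V by (auto simp: induced_P4_def)
  have "induced_P4 E a b c d"
    using P4 \<open>E a b\<close> \<open>E b c\<close> \<open>E c d\<close> by (simp add: induced_P4_def)
  moreover have "b \<in> V" "c \<in> V" "d \<in> V"
    using E_in_V \<open>E a b\<close> \<open>E b c\<close> \<open>E c d\<close> by auto
  ultimately show False
    using assms(1,3) by (auto simp: cograph_iff_no_induced_P4)
qed

lemma cograph_disjoint_union:
  assumes "cograph V E" "cograph W F" "V \<inter> W = {}"
  shows "cograph (V \<union> W) (\<lambda>u v. E u v \<or> F u v)"
proof -
  have E_in: "E u v \<Longrightarrow> u \<in> V \<and> v \<in> V" and F_in: "F u v \<Longrightarrow> u \<in> W \<and> v \<in> W" for u v
    using assms(1,2)[THEN cograph_imp_simple_graph] by (simp_all add: simple_graph_def)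
  have "simple_graph (V \<union> W) (\<lambda>u v. E u v \<or> F u v)"
    using assms(1,2)[THEN cograph_imp_simple_graph] by (auto simp: simple_graph_def)
  moreover have "\<not> induced_P4 (\<lambda>u v. E u v \<or> F u v) a b c d" if "a \<in> V \<union> W" for a b c d
  proof (cases "a \<in> V")
    case True
    have "F u v \<Longrightarrow> u \<notin> V" for u v
      using F_in assms(3) by blast
    then show ?thesis
      by (rule no_induced_P4_union_from_side[OF assms(1) _ True])
  next
    case False
    then have "a \<in> W"
      using that by blast
    have "E u v \<Longrightarrow> u \<notin> W" for u v
      using E_in assms(3) by blast
    then have "\<not> induced_P4 (\<lambda>u v. F u v \<or> E u v) a b c d"
      by (rule no_induced_P4_union_from_side[OF assms(2) _ \<open>a \<in> W\<close>])
    moreover have "(\<lambda>u v. F u v \<or> E u v) = (\<lambda>u v. E u v \<or> F u v)"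
      by auto
    ultimately show ?thesis
      by simp
  qed
  ultimately show ?thesis
    by (simp add: cograph_iff_no_induced_P4)
qed

definition complete_split :: "nat set \<Rightarrow> nat set \<Rightarrow> nat \<Rightarrow> nat \<Rightarrow> bool" where
  "complete_split Q I u v \<longleftrightarrow> u \<noteq> v \<and> u \<in> Q \<union> I \<and> v \<in> Q \<union> I \<and> (u \<in> Q \<or> v \<in> Q)"

lemma cograph_complete_split:
  assumes "finite Q" "finite I"
  shows "cograph (Q \<union> I) (complete_split Q I)"
  using assms unfolding cograph_def simple_graph_def complete_split_def by auto

context
  fixes V Q I :: "nat set" and E :: "nat \<Rightarrow> nat \<Rightarrow> bool"
  assumes graph: "simple_graph V E"
    and fresh: "V \<inter> (Q \<union> I) = {}"
    and disjoint: "Q \<inter> I = {}"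
    and finite_Q: "finite Q" and finite_I: "finite I"
begin

abbreviation ext_edges :: "nat \<Rightarrow> nat \<Rightarrow> bool" where
  "ext_edges \<equiv> \<lambda>u v. E u v \<or> complete_split Q I u v"

lemma k_sparse_ext_edges_on_V:
  assumes "T \<subseteq> V"
  shows "k_sparse ext_edges k T \<longleftrightarrow> k_sparse E k T"
  using assms fresh by (intro k_sparse_cong) (auto simp: complete_split_def)

lemma k_dense_ext_edges_on_V:
  assumes "T \<subseteq> V"
  shows "k_dense ext_edges k T \<longleftrightarrow> k_dense E k T"
  using assms fresh by (intro k_dense_cong) (auto simp: complete_split_def)

lemma edge_in_V: "E u v \<Longrightarrow> u \<in> V \<and> v \<in> V"
  using graph by (simp add: simple_graph_def)

lemma finite_subset_extended_vertices:
  assumes "S \<subseteq> V \<union> Q \<union> I"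
  shows "finite S"
  using assms graph finite_Q finite_I by (meson finite_Un finite_subset simple_graph_def)

lemma ext_edges_no_k_dense:
  assumes no_dense: "\<forall>T\<subseteq>V. card T = i \<longrightarrow> \<not> k_dense E k T"
    and small_Q: "card Q + k + 2 \<le> i"
    and S: "S \<subseteq> V \<union> Q \<union> I" "card S = i"
  shows "\<not> k_dense ext_edges k S"
proof
  assume dense: "k_dense ext_edges k S"
  have "finite S"
    using S(1) by (rule finite_subset_extended_vertices)
  have non_neighbours_card_le: "card T \<le> k" if "x \<in> S" "T \<subseteq> {v\<in>S. compl_edges ext_edges x v}" for x T
    using k_sparse_card_le[OF dense[unfolded k_dense_def] that \<open>finite S\<close>] .
  consider "S \<subseteq> V" | x where "x \<in> S \<inter> I" | x where "x \<in> S \<inter> Q" "S \<inter> I = {}"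
    using S(1) by blast
  then show False
  proof cases
    case 1
    then have "k_dense E k S"
      using dense k_dense_ext_edges_on_V by blast
    then show False
      using no_dense 1 S(2) by blast
  next
    case (2 x)
    have "x \<notin> V" "x \<notin> Q"
      using 2 fresh disjoint by auto
    then have "S - Q - {x} \<subseteq> {v\<in>S. compl_edges ext_edges x v}"
      by (auto simp: compl_edges_def complete_split_def dest: edge_in_V)
    then have "card (S - Q - {x}) \<le> k"
      using non_neighbours_card_le[of x "S - Q - {x}"] 2 by blast
    moreover have "card S - card Q - 1 \<le> card (S - Q - {x})"
      using diff_card_le_card_Diff[OF finite_Q, of S] diff_card_le_card_Diff[of "{x}" "S - Q"]
      by simp
    ultimately show False
      using small_Q S(2) by linarith
  next
    case (3 x)
    have "x \<notin> V"
      using 3 fresh by auto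
    then have "S \<inter> V \<subseteq> {v\<in>S. compl_edges ext_edges x v}"
      using fresh by (auto simp: compl_edges_def complete_split_def dest: edge_in_V)
    then have "card (S \<inter> V) \<le> k"
      using non_neighbours_card_le[of x "S \<inter> V"] 3 by blast
    moreover have "card (S - Q) \<le> card (S \<inter> V)"
      using 3 S(1) \<open>finite S\<close> by (intro card_mono) auto
    moreover have "card S - card Q \<le> card (S - Q)"
      using finite_Q by (rule diff_card_le_card_Diff)
    ultimately show False
      using small_Q S(2) by linarith
  qed
qed

lemma ext_edges_no_k_sparse:
  assumes no_sparse: "\<forall>T\<subseteq>V. card T = j - k - 1 \<longrightarrow> \<not> k_sparse E k T"
    and small_I: "card I \<le> k + 1"
    and S: "S \<subseteq> V \<union> Q \<union> I" "card S = j"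
  shows "\<not> k_sparse ext_edges k S"
proof
  assume sparse: "k_sparse ext_edges k S"
  have "finite S"
    using S(1) by (rule finite_subset_extended_vertices)
  have "k_sparse E k (S \<inter> V)"
    using k_sparse_subset[OF sparse _ \<open>finite S\<close>, of "S \<inter> V"] k_sparse_ext_edges_on_V by blast
  have "card (S \<inter> V) < j - k - 1"
  proof (rule ccontr)
    assume "\<not> card (S \<inter> V) < j - k - 1"
    then obtain T where "T \<subseteq> S \<inter> V" "card T = j - k - 1"
      by (meson not_less obtain_subset_with_card_n)
    moreover have "k_sparse E k T"
      using k_sparse_subset[OF \<open>k_sparse E k (S \<inter> V)\<close> \<open>T \<subseteq> S \<inter> V\<close>] \<open>finite S\<close> by blast
    ultimately show False
      using no_sparse by blast
  qed
  then have large_new: "k + 2 \<le> card (S - V)"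
    using card_Int_Diff[OF \<open>finite S\<close>, of V] S(2) by linarith
  have "\<not> S - V \<subseteq> I"
  proof
    assume "S - V \<subseteq> I"
    then have "card (S - V) \<le> card I"
      by (rule card_mono[OF finite_I])
    then show False
      using small_I large_new by linarith
  qed
  then obtain x where "x \<in> S - V" "x \<in> Q"
    using S(1) by blast
  then have "S - V - {x} \<subseteq> {v\<in>S. ext_edges x v}"
    using S(1) by (auto simp: complete_split_def)
  then have "card (S - V - {x}) \<le> k"
    using k_sparse_card_le[OF sparse _ _ \<open>finite S\<close>] \<open>x \<in> S - V\<close> by blast
  then show False
    using large_new \<open>x \<in> S - V\<close> \<open>finite S\<close> by simp
qed

end

lemma cograph_counterexample_extend:
  assumes "cograph_counterexample k i (j - k - 1) m" "k + 2 \<le> i"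
  shows "cograph_counterexample k i j (m + (i - 1))"
proof -
  obtain V E where G: "cograph V E" "card V = m" "\<not> has_dense_or_sparse V E k i (j - k - 1)"
    using assms(1) by (auto simp: cograph_counterexample_def)
  have graph: "simple_graph V E"
    using G(1) by (rule cograph_imp_simple_graph)
  then have "finite V"
    by (simp add: simple_graph_def)
  then obtain N where "V \<subseteq> {..<N}"
    using finite_nat_bounded by blast
  define Q where "Q = {N..<N + (i - k - 2)}"
  define I where "I = {N + (i - k - 2)..<N + (i - 1)}"
  have fresh: "V \<inter> (Q \<union> I) = {}" and disjoint: "Q \<inter> I = {}"
    using \<open>V \<subseteq> {..<N}\<close> by (auto simp: Q_def I_def)
  have finite_Q: "finite Q" and finite_I: "finite I"
    by (simp_all add: Q_def I_def)
  have card_Q: "card Q + k + 2 = i" and card_I: "card I = k + 1"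
    using assms(2) by (auto simp: Q_def I_def)
  have "cograph (V \<union> (Q \<union> I)) (\<lambda>u v. E u v \<or> complete_split Q I u v)"
    using cograph_disjoint_union[OF G(1) cograph_complete_split[OF finite_Q finite_I] fresh] .
  moreover have "card (V \<union> (Q \<union> I)) = m + (i - 1)"
    using card_Un_disjoint[OF \<open>finite V\<close> _ fresh] card_Un_disjoint[OF finite_Q finite_I disjoint]
      finite_Q finite_I card_Q card_I G(2)
    by simp
  moreover have "\<not> has_dense_or_sparse (V \<union> (Q \<union> I)) (\<lambda>u v. E u v \<or> complete_split Q I u v) k i j"
  proof -
    have "\<forall>T\<subseteq>V. card T = i \<longrightarrow> \<not> k_dense E k T"
      and "\<forall>T\<subseteq>V. card T = j - k - 1 \<longrightarrow> \<not> k_sparse E k T"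
      using G(3) unfolding has_dense_or_sparse_def by blast+
    note no_dense = ext_edges_no_k_dense[OF graph fresh disjoint finite_Q finite_I this(1)]
      and no_sparse = ext_edges_no_k_sparse[OF graph fresh disjoint finite_Q finite_I this(2)]
    show ?thesis
      unfolding has_dense_or_sparse_def using no_dense no_sparse card_Q card_I
      by (simp add: Un_assoc)
  qed
  ultimately show ?thesis
    unfolding cograph_counterexample_def by blast
qed

theorem lemma7p5:
  fixes k i j :: nat
  assumes "i \<ge> k + 2" and "j \<ge> k + 2"
  shows "R_cograph k i j \<ge> (i - 1) + R_cograph k i (j - k - 1)"
proof (rule R_cograph_ge)
  fix n assume n: "n < (i - 1) + R_cograph k i (j - k - 1)"
  show "cograph_counterexample k i j n"
  proof (cases "n < i - 1")
    case True
    then show ?thesis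
      using cograph_counterexample_complete assms(2) by simp
  next
    case False
    then have "cograph_counterexample k i (j - k - 1) (n - (i - 1))"
      using n by (intro cograph_counterexample_if_less_R_cograph) linarith
    then have "cograph_counterexample k i j (n - (i - 1) + (i - 1))"
      using cograph_counterexample_extend assms(1) by blast
    then show ?thesis
      using False by simp
  qed
qed

end
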